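(* Let $a>0$ and $0\le\rho<1$. There exists a constant $c=c(a,\rho)>0$ such that every probability measure $\nu$ on $\mathbb{Z}$ with $m_1(\nu)=\sum_k|k|\nu(k)\le a$ and $\nu(\beta\mathbb{Z}+r)\le\rho$ for all integers $\beta\notin\{1,-1\}$ and all $r\in\mathbb{Z}$ (with $0\cdot\mathbb{Z}+r=\{r\}$) satisfies $|\hat{\nu}(t)|\le e^{-ct^2}$ for all $t\in(-1/2,1/2]$.
   Context: The Fourier transform of a probability measure $\nu$ on $\mathbb{Z}$ is $\hat{\nu}(t)=\sum_{k\in\mathbb{Z}}\nu(k)e^{2\pi ikt}$. *)

theory Defs
  imports "HOL-Probability.Probability"
begin

definition fourier_pmf :: "int pmf \<Rightarrow> real \<Rightarrow> complex" where
  "fourier_pmf \<nu> t = (\<Sum>\<^sub>\<infinity>k. complex_of_real (pmf \<nu> k) * cis (2 * pi * real_of_int k * t))"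

definition first_moment :: "int pmf \<Rightarrow> ennreal" where
  "first_moment \<nu> = (\<integral>\<^sup>+ k. ennreal (real_of_int \<bar>k\<bar>) \<partial>measure_pmf \<nu>)"

definition arith_prog :: "int \<Rightarrow> int \<Rightarrow> int set" where
  "arith_prog \<beta> r = {\<beta> * j + r | j. True}"

end

theory Submission
  imports Defs
begin

(* Fix nu and t in (-1/2, 1/2]; with phi = Arg(hat nu(t)) / (2 pi) the modulus is
   |hat nu(t)| = E cos(2 pi (k t - phi)).  Call k "near" if k t - phi lies within |t| / (4 M) of an
   integer, for a cut-off M with a / M <= (1 - rho) / 2.  Each point that is not near lowers
   |hat nu(t)| below 1 by at least (pi t / (2 M))^2 / 4, so it suffices to show that the near
   points carry mass at most rho + a / M.  Outside [-M, M] this is Markov's inequality.  Inside,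
   a determinant argument shows that the differences k - k0 and their integer approximations of
   (k - k0) t are proportional, so all near points lie in one progression beta Z + k0; beta = 1
   or -1 is impossible since a nonzero multiple d t with t in (-1/2, 1/2] is never closer than
   |t| to a multiple of d.  The hypothesis bounds the mass of that progression by rho. *)

lemma one_minus_cos_ge_quadratic:
  fixes x :: real
  assumes "\<bar>x\<bar> \<le> 2"
  shows "x\<^sup>2 / 4 \<le> 1 - cos x"
proof -
  obtain s where "cos x = (\<Sum>m<4. cos_coeff m * x ^ m) + (cos (s + 1/2 * real 4 * pi) / fact 4) * x ^ 4"
    using Maclaurin_cos_expansion by blast
  hence expansion: "cos x = 1 - x\<^sup>2 / 2 + cos (s + 2 * pi) / 24 * x ^ 4"
    by (simp add: cos_coeff_def lessThan_nat_numeral fact_numeral power2_eq_square)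
  have "cos (s + 2 * pi) / 24 * x ^ 4 \<le> 1 / 24 * x ^ 4"
    by (intro mult_right_mono divide_right_mono) (auto simp: zero_le_even_power)
  moreover have "x ^ 4 \<le> 4 * x\<^sup>2"
  proof -
    have "x\<^sup>2 \<le> 2\<^sup>2"
      using assms by (metis abs_le_square_iff abs_numeral)
    have "x ^ 4 = x\<^sup>2 * x\<^sup>2" by algebra
    also have "\<dots> \<le> 4 * x\<^sup>2"
      using \<open>x\<^sup>2 \<le> 2\<^sup>2\<close> by (intro mult_right_mono) auto
    finally show ?thesis .
  qed
  ultimately show ?thesis
    using expansion zero_le_power2[of x] by linarith
qed

lemma cos_gt_imp_near_integer:
  fixes x \<epsilon> :: real
  assumes "cos (2 * pi * x) > cos (2 * pi * \<epsilon>)" and "0 \<le> \<epsilon>" and "\<epsilon> \<le> 1/2"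
  shows "\<exists>n::int. \<bar>x - n\<bar> < \<epsilon>"
proof (rule ccontr)
  assume no_integer_near: "\<not> (\<exists>n::int. \<bar>x - n\<bar> < \<epsilon>)"
  define y where "y = x - round x"
  have far: "\<epsilon> \<le> \<bar>y\<bar>" and half: "\<bar>y\<bar> \<le> 1/2"
    using no_integer_near of_int_round_abs_le[of x] unfolding y_def
    by (auto simp: not_less abs_minus_commute)
  have "cos (2 * pi * x) = cos (2 * pi * y)"
    using cos_int_2pin[of "round x"] sin_int_2pin[of "round x"]
    unfolding y_def right_diff_distrib cos_diff by simp
  also have "\<dots> = cos (2 * pi * \<bar>y\<bar>)"
    by (cases "y \<ge> 0") auto
  also have "\<dots> \<le> cos (2 * pi * \<epsilon>)"
    using far half assms(2) by (intro cos_monotone_0_pi_le) auto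
  finally show False using assms(1) by simp
qed

text \<open>Rotating \<open>hat nu(t)\<close> by its argument turns its modulus into the expectation of a cosine.\<close>
lemma fourier_norm_eq:
  "norm (fourier_pmf \<nu> t) =
     measure_pmf.expectation \<nu> (\<lambda>k. cos (2 * pi * real_of_int k * t - Arg (fourier_pmf \<nu> t)))"
proof -
  define z where "z = fourier_pmf \<nu> t"
  define \<theta> where "\<theta> = Arg z"
  define f where "f = (\<lambda>k. complex_of_real (pmf \<nu> k) * cis (2 * pi * real_of_int k * t))"
  have summable: "Infinite_Set_Sum.abs_summable_on f UNIV"
    by (rule abs_summable_on_comparison_test'[OF pmf_abs_summable[of \<nu>]]) (simp add: f_def norm_mult)
  have z: "z = infsetsum f UNIV"
    unfolding z_def fourier_pmf_def f_def[symmetric] using infsetsum_infsum[OF summable] by simp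
  have "norm z = Re (cis (-\<theta>) * z)"
  proof -
    have "z = complex_of_real (norm z) * cis \<theta>"
      unfolding \<theta>_def by (metis rcis_cmod_Arg rcis_def)
    hence "cis (-\<theta>) * z = complex_of_real (norm z) * (cis (-\<theta>) * cis \<theta>)"
      by (metis mult.left_commute)
    thus ?thesis by (simp add: cis_mult)
  qed
  also have "cis (-\<theta>) * z = infsetsum (\<lambda>k. cis (-\<theta>) * f k) UNIV"
    unfolding z using summable by (simp add: infsetsum_cmult_right)
  also have "Re \<dots> = infsetsum (\<lambda>k. Re (cis (-\<theta>) * f k)) UNIV"
    using summable by (intro Re_infsetsum) auto
  also have "\<dots> = infsetsum (\<lambda>k. pmf \<nu> k * cos (2 * pi * real_of_int k * t - \<theta>)) UNIV"
    by (intro infsetsum_cong) (simp_all add: f_def cos_diff algebra_simps)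
  also have "\<dots> = measure_pmf.expectation \<nu> (\<lambda>k. cos (2 * pi * real_of_int k * t - \<theta>))"
    by (rule pmf_expectation_eq_infsetsum[symmetric])
  finally show ?thesis unfolding z_def \<theta>_def .
qed

lemma fourier_deficit:
  fixes \<nu> :: "int pmf" and t \<delta> :: real
  shows "(1 - cos \<delta>) *
           measure_pmf.prob \<nu> {k. cos (2 * pi * real_of_int k * t - Arg (fourier_pmf \<nu> t)) \<le> cos \<delta>}
         \<le> 1 - norm (fourier_pmf \<nu> t)"
proof -
  define g where "g = (\<lambda>k::int. cos (2 * pi * real_of_int k * t - Arg (fourier_pmf \<nu> t)))"
  define F where "F = {k. g k \<le> cos \<delta>}"
  have integrable_g: "integrable (measure_pmf \<nu>) g"
    by (intro measure_pmf.integrable_const_bound[where B = 1]) (auto simp: g_def)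
  have "(1 - cos \<delta>) * measure_pmf.prob \<nu> F =
          measure_pmf.expectation \<nu> (\<lambda>k. (1 - cos \<delta>) * indicator F k)"
    by simp
  also have "\<dots> \<le> measure_pmf.expectation \<nu> (\<lambda>k. 1 - g k)"
  proof (rule integral_mono)
    show "integrable (measure_pmf \<nu>) (\<lambda>k. (1 - cos \<delta>) * indicator F k)"
      by (intro measure_pmf.integrable_const_bound[where B = "1 - cos \<delta>"]) (auto simp: indicator_def)
    show "integrable (measure_pmf \<nu>) (\<lambda>k. 1 - g k)"
      using integrable_g by simp
    show "(1 - cos \<delta>) * indicator F k \<le> 1 - g k" for k
      unfolding F_def g_def by (auto simp: indicator_def)
  qed
  also have "\<dots> = 1 - norm (fourier_pmf \<nu> t)"
    using integrable_g by (simp add: fourier_norm_eq g_def measure_pmf.prob_space)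
  finally show ?thesis unfolding F_def g_def .
qed

lemma first_moment_tail:
  fixes a M :: real
  assumes "first_moment \<nu> \<le> ennreal a" and "M > 0" and "a \<ge> 0"
  shows "measure_pmf.prob \<nu> {k. M < real_of_int \<bar>k\<bar>} \<le> a / M"
proof -
  define T where "T = {k::int. M < real_of_int \<bar>k\<bar>}"
  have "ennreal M * emeasure (measure_pmf \<nu>) T = (\<integral>\<^sup>+ k. ennreal M * indicator T k \<partial>measure_pmf \<nu>)"
    by (simp add: nn_integral_cmult_indicator)
  also have "\<dots> \<le> (\<integral>\<^sup>+ k. ennreal (real_of_int \<bar>k\<bar>) \<partial>measure_pmf \<nu>)"
    by (intro nn_integral_mono) (auto simp: T_def indicator_def)
  also have "\<dots> \<le> ennreal a"
    using assms(1) unfolding first_moment_def .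
  finally have "ennreal (M * measure_pmf.prob \<nu> T) \<le> ennreal a"
    using assms(2) by (simp add: measure_pmf.emeasure_eq_measure ennreal_mult)
  hence "M * measure_pmf.prob \<nu> T \<le> a"
    using assms(3) by (simp add: ennreal_le_iff)
  thus ?thesis unfolding T_def using assms(2) by (simp add: field_simps mult.commute)
qed

lemma abs_le_dist_to_integer:
  fixes t :: real and j :: int
  assumes "-1/2 < t" and "t \<le> 1/2"
  shows "\<bar>t\<bar> \<le> \<bar>t - j\<bar>"
proof -
  have "j = 0 \<or> real_of_int j \<ge> 1 \<or> real_of_int j \<le> -1" by linarith
  thus ?thesis using assms by (elim disjE) (auto simp: abs_if)
qed

text \<open>A nonzero multiple \<open>d t\<close> of \<open>t \<in> (-1/2, 1/2]\<close> cannot be approximated better than \<open>|t|\<close> by a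
  multiple \<open>m\<close> of \<open>d\<close>, since then \<open>|d t - m| = |d| |t - m/d| \<ge> |t|\<close>.\<close>
lemma approximation_not_multiple:
  fixes t :: real and d m :: int
  assumes "-1/2 < t" and "t \<le> 1/2" and "d \<noteq> 0" and "\<bar>d * t - m\<bar> < \<bar>t\<bar>"
  shows "\<not> d dvd m"
proof
  assume "d dvd m"
  then obtain j where j: "m = d * j" by (elim dvdE)
  have "\<bar>t\<bar> \<le> \<bar>t - j\<bar>"
    using assms(1,2) by (rule abs_le_dist_to_integer)
  also have "\<dots> \<le> \<bar>real_of_int d\<bar> * \<bar>t - j\<bar>"
  proof -
    have "1 \<le> \<bar>real_of_int d\<bar>" using assms(3) by linarith
    thus ?thesis using mult_right_mono[of 1 "\<bar>real_of_int d\<bar>" "\<bar>t - j\<bar>"] by simp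
  qed
  also have "\<dots> = \<bar>d * t - m\<bar>"
    unfolding j by (simp add: abs_mult[symmetric] algebra_simps)
  finally show False using assms(4) by linarith
qed

text \<open>Two bounded integers \<open>d, d'\<close> whose multiples of \<open>t\<close> are both well approximated by integers
  \<open>m, m'\<close> have proportional approximation vectors: the determinant \<open>d m' - d' m\<close> is an integer of
  modulus less than 1.\<close>
lemma approximations_proportional:
  fixes t \<eta> B :: real and d d' m m' :: int
  assumes "\<bar>d\<bar> \<le> B" and "\<bar>d'\<bar> \<le> B" and "B > 0" and "2 * B * \<eta> \<le> 1"
    and "\<bar>d * t - m\<bar> < \<eta>" and "\<bar>d' * t - m'\<bar> < \<eta>"
  shows "d * m' = d' * m"
proof -
  have det: "real_of_int (d * m' - d' * m) = d' * (d * t - m) - d * (d' * t - m')"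
    by (simp add: algebra_simps)
  have term_bound: "\<bar>e * x\<bar> < B * \<eta>" if "\<bar>e\<bar> \<le> B" and "\<bar>x\<bar> < \<eta>" for e x :: real
  proof -
    have "\<bar>e * x\<bar> \<le> B * \<bar>x\<bar>"
      unfolding abs_mult using that(1) by (rule mult_right_mono) simp
    also have "\<dots> < B * \<eta>"
      using that(2) \<open>B > 0\<close> by simp
    finally show ?thesis .
  qed
  have "\<bar>d' * (d * t - m)\<bar> < B * \<eta>" and "\<bar>d * (d' * t - m')\<bar> < B * \<eta>"
    using assms by (auto intro: term_bound)
  hence "\<bar>real_of_int (d * m' - d' * m)\<bar> < 1"
    unfolding det using assms(4) by linarith
  thus ?thesis by linarith
qed

lemma primitive_step_dvd:
  fixes d d' m m' :: int
  assumes "d' \<noteq> 0" and "d * m' = d' * m"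
  shows "d' div gcd d' m' dvd d"
proof -
  define g where "g = gcd d' m'"
  define \<beta> where "\<beta> = d' div g"
  define p where "p = m' div g"
  have "g \<noteq> 0" using assms(1) unfolding g_def by simp
  have "d * p * g = \<beta> * m * g"
    using assms(2) unfolding \<beta>_def p_def g_def by (simp add: ac_simps)
  hence "\<beta> dvd d * p"
    using \<open>g \<noteq> 0\<close> by (metis dvd_triv_left mult_right_cancel)
  moreover have "coprime \<beta> p"
    unfolding \<beta>_def p_def g_def using assms(1) by (intro div_gcd_coprime) auto
  ultimately show ?thesis
    unfolding \<beta>_def g_def by (simp add: coprime_dvd_mult_left_iff)
qed

lemma primitive_step_unit_imp_dvd:
  fixes d' m' :: int
  assumes "d' div gcd d' m' \<in> {1, -1}"
  shows "d' dvd m'"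
proof -
  have "d' = gcd d' m' \<or> d' = - gcd d' m'"
    using assms by (metis dvd_div_mult_self gcd_dvd1 insert_iff mult_1 mult_minus_left singletonD)
  thus ?thesis by (metis gcd_dvd2 minus_dvd_iff)
qed

lemma near_points_in_arith_prog:
  fixes t \<phi> \<epsilon> :: real and M :: nat and S :: "int set"
  assumes "M \<ge> 1" and "-1/2 < t" and "t \<le> 1/2"
    and near: "\<And>k. k \<in> S \<Longrightarrow> \<exists>n::int. \<bar>k * t - \<phi> - n\<bar> < \<epsilon>"
    and box: "\<And>k. k \<in> S \<Longrightarrow> \<bar>k\<bar> \<le> int M"
    and "8 * M * \<epsilon> \<le> 1" and "2 * \<epsilon> \<le> \<bar>t\<bar>"
  shows "\<exists>\<beta> r. \<beta> \<notin> {1, -1} \<and> S \<subseteq> arith_prog \<beta> r"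
proof (cases "\<exists>k0. S \<subseteq> {k0}")
  case True
  then obtain k0 where "S \<subseteq> arith_prog 0 k0"
    unfolding arith_prog_def by auto
  thus ?thesis by (intro exI[of _ 0] exI[of _ k0]) auto
next
  case False
  then obtain k0 k1 where k0: "k0 \<in> S" and k1: "k1 \<in> S" and "k1 \<noteq> k0"
    by blast
  from near obtain n :: "int \<Rightarrow> int" where n: "\<And>k. k \<in> S \<Longrightarrow> \<bar>k * t - \<phi> - n k\<bar> < \<epsilon>"
    by metis
  have close: "\<bar>(k - k0) * t - (n k - n k0)\<bar> < 2 * \<epsilon>" if "k \<in> S" for k
    using n[OF that] n[OF k0] by (simp add: algebra_simps)
  have bounded: "\<bar>real_of_int (k - k0)\<bar> \<le> 2 * real M" if "k \<in> S" for k
    using box[OF that] box[OF k0] by linarith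
  define d1 where "d1 = k1 - k0"
  define m1 where "m1 = n k1 - n k0"
  define \<beta> where "\<beta> = d1 div gcd d1 m1"
  have "d1 \<noteq> 0" using \<open>k1 \<noteq> k0\<close> unfolding d1_def by simp
  have "S \<subseteq> arith_prog \<beta> k0"
  proof
    fix k assume "k \<in> S"
    have "(k - k0) * m1 = d1 * (n k - n k0)"
      unfolding d1_def m1_def
      using assms(1,6) bounded[OF \<open>k \<in> S\<close>] bounded[OF k1] close[OF \<open>k \<in> S\<close>] close[OF k1]
      by (intro approximations_proportional[where B = "2 * real M" and \<eta> = "2 * \<epsilon>" and t = t]) auto
    hence "\<beta> dvd k - k0"
      unfolding \<beta>_def using \<open>d1 \<noteq> 0\<close> by (rule primitive_step_dvd[rotated])
    then obtain j where "k = \<beta> * j + k0" by (metis dvdE diff_eq_eq)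
    thus "k \<in> arith_prog \<beta> k0" unfolding arith_prog_def by blast
  qed
  moreover have "\<not> d1 dvd m1"
    using assms(2,3) \<open>d1 \<noteq> 0\<close> close[OF k1] assms(7) unfolding d1_def m1_def
    by (intro approximation_not_multiple) auto
  hence "\<beta> \<notin> {1, -1}"
    unfolding \<beta>_def using primitive_step_unit_imp_dvd by blast
  ultimately show ?thesis by blast
qed

text \<open>Mass of the near points: for any phase \<open>phi\<close>, the integers \<open>k\<close> with \<open>k t - phi\<close> within
  \<open>|t|/(4M)\<close> of an integer (measured through the cosine) carry mass at most \<open>rho + a/M\<close>; inside
  \<open>[-M, M]\<close> they lie in one admissible progression, outside it Markov's inequality applies.\<close>
lemma near_phase_mass:
  fixes \<nu> :: "int pmf" and a \<rho> t \<phi> :: real and M :: nat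
  assumes "M \<ge> 1" and "a \<ge> 0" and moment: "first_moment \<nu> \<le> ennreal a"
    and progressions: "\<forall>\<beta> r. \<beta> \<notin> {1, -1} \<longrightarrow> measure_pmf.prob \<nu> (arith_prog \<beta> r) \<le> \<rho>"
    and "-1/2 < t" and "t \<le> 1/2"
  shows "measure_pmf.prob \<nu> {k. cos (2 * pi * (\<bar>t\<bar> / (4 * M))) < cos (2 * pi * (k * t - \<phi>))}
           \<le> \<rho> + a / M"
proof -
  define \<epsilon> where "\<epsilon> = \<bar>t\<bar> / (4 * M)"
  define A where "A = {k::int. cos (2 * pi * \<epsilon>) < cos (2 * pi * (k * t - \<phi>))}"
  define box where "box = {k::int. \<bar>k\<bar> \<le> int M}"
  define outside where "outside = {k::int. real M < real_of_int \<bar>k\<bar>}"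
  have M_ge_1: "real M \<ge> 1" using assms(1) by simp
  have "\<bar>t\<bar> * 1 \<le> \<bar>t\<bar> * (2 * M)"
    using M_ge_1 by (intro mult_left_mono) auto
  hence \<epsilon>_bounds: "0 \<le> \<epsilon>" "\<epsilon> \<le> 1/2" "8 * M * \<epsilon> \<le> 1" "2 * \<epsilon> \<le> \<bar>t\<bar>"
    unfolding \<epsilon>_def using M_ge_1 assms(5,6) by (auto simp: field_simps)
  have "\<exists>\<beta> r. \<beta> \<notin> {1, -1} \<and> A \<inter> box \<subseteq> arith_prog \<beta> r"
  proof (rule near_points_in_arith_prog[OF assms(1,5,6) _ _ \<epsilon>_bounds(3,4), where \<phi> = \<phi>])
    show "\<exists>n::int. \<bar>k * t - \<phi> - n\<bar> < \<epsilon>" if "k \<in> A \<inter> box" for k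
      using that \<epsilon>_bounds(1,2) unfolding A_def by (intro cos_gt_imp_near_integer) auto
    show "\<bar>k\<bar> \<le> int M" if "k \<in> A \<inter> box" for k
      using that unfolding box_def by simp
  qed
  hence inner: "measure_pmf.prob \<nu> (A \<inter> box) \<le> \<rho>"
    using progressions by (metis measure_pmf.finite_measure_mono sets_measure_pmf UNIV_I order_trans)
  have tail: "measure_pmf.prob \<nu> outside \<le> a / M"
    unfolding outside_def using first_moment_tail[OF moment] M_ge_1 assms(2) by simp
  have "A \<subseteq> (A \<inter> box) \<union> outside"
    unfolding box_def outside_def by auto
  hence "measure_pmf.prob \<nu> A \<le> measure_pmf.prob \<nu> ((A \<inter> box) \<union> outside)"
    by (intro measure_pmf.finite_measure_mono) auto
  also have "\<dots> \<le> measure_pmf.prob \<nu> (A \<inter> box) + measure_pmf.prob \<nu> outside"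
    by (intro measure_subadditive) auto
  finally show ?thesis
    using inner tail unfolding A_def \<epsilon>_def by simp
qed

lemma fourier_deficit_for_cutoff:
  fixes \<nu> :: "int pmf" and a \<rho> t :: real and M :: nat
  assumes "M \<ge> 1" and "a \<ge> 0" and moment: "first_moment \<nu> \<le> ennreal a"
    and progressions: "\<forall>\<beta> r. \<beta> \<notin> {1, -1} \<longrightarrow> measure_pmf.prob \<nu> (arith_prog \<beta> r) \<le> \<rho>"
    and "-1/2 < t" and "t \<le> 1/2"
  shows "(1 - \<rho> - a / M) * (pi * t / (2 * real M))\<^sup>2 / 4 \<le> 1 - norm (fourier_pmf \<nu> t)"
proof -
  define \<phi> where "\<phi> = Arg (fourier_pmf \<nu> t) / (2 * pi)"
  define \<delta> where "\<delta> = 2 * pi * (\<bar>t\<bar> / (4 * M))"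
  define A where "A = {k::int. cos \<delta> < cos (2 * pi * (k * t - \<phi>))}"
  have "measure_pmf.prob \<nu> A \<le> \<rho> + a / M"
    unfolding A_def \<delta>_def using assms by (rule near_phase_mass)
  hence far_mass: "1 - \<rho> - a / M \<le> measure_pmf.prob \<nu> (UNIV - A)"
    using measure_pmf.prob_compl[of A \<nu>] by simp
  have "{k. cos (2 * pi * real_of_int k * t - Arg (fourier_pmf \<nu> t)) \<le> cos \<delta>} = UNIV - A"
  proof -
    have "2 * pi * (k * t - \<phi>) = 2 * pi * real_of_int k * t - Arg (fourier_pmf \<nu> t)" for k :: int
      unfolding \<phi>_def by (simp add: field_simps)
    thus ?thesis unfolding A_def by auto
  qed
  hence deficit: "(1 - cos \<delta>) * measure_pmf.prob \<nu> (UNIV - A) \<le> 1 - norm (fourier_pmf \<nu> t)"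
    using fourier_deficit[of \<delta> \<nu> t] by simp
  have "\<delta> \<le> pi / 4" and "0 \<le> \<delta>"
    unfolding \<delta>_def using assms(1,5,6) by (auto simp: field_simps)
  hence "\<delta>\<^sup>2 / 4 \<le> 1 - cos \<delta>"
    using pi_less_4 by (intro one_minus_cos_ge_quadratic) auto
  have "\<delta>\<^sup>2 = (pi * t / (2 * real M))\<^sup>2"
    unfolding \<delta>_def by (simp add: power2_eq_square field_simps)
  hence "(1 - \<rho> - a / M) * (pi * t / (2 * real M))\<^sup>2 / 4 = (1 - \<rho> - a / M) * (\<delta>\<^sup>2 / 4)"
    by simp
  also have "\<dots> \<le> measure_pmf.prob \<nu> (UNIV - A) * (\<delta>\<^sup>2 / 4)"
    using far_mass by (rule mult_right_mono) simp
  also have "\<dots> \<le> measure_pmf.prob \<nu> (UNIV - A) * (1 - cos \<delta>)"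
    using \<open>\<delta>\<^sup>2 / 4 \<le> 1 - cos \<delta>\<close> by (rule mult_left_mono) simp
  also have "\<dots> \<le> 1 - norm (fourier_pmf \<nu> t)"
    using deficit by (simp add: mult.commute)
  finally show ?thesis .
qed

theorem theorem3p3:
  fixes a \<rho> :: real
  assumes "a > 0" and "0 \<le> \<rho>" and "\<rho> < 1"
  shows "\<exists>c>0. \<forall>\<nu> :: int pmf.
           first_moment \<nu> \<le> ennreal a \<longrightarrow>
           (\<forall>\<beta> r. \<beta> \<notin> {1, -1} \<longrightarrow> measure_pmf.prob \<nu> (arith_prog \<beta> r) \<le> \<rho>) \<longrightarrow>
           (\<forall>t \<in> {-1/2<..1/2}. norm (fourier_pmf \<nu> t) \<le> exp (- c * t\<^sup>2))"
proof -
  define M :: nat where "M = nat \<lceil>2 * a / (1 - \<rho>)\<rceil> + 1"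
  have "M \<ge> 1" unfolding M_def by simp
  have "2 * a / (1 - \<rho>) \<le> real M" unfolding M_def by linarith
  hence cutoff: "a / M \<le> (1 - \<rho>) / 2"
    using assms \<open>M \<ge> 1\<close> by (simp add: field_simps)
  define c where "c = (1 - \<rho>) * pi\<^sup>2 / (32 * (real M)\<^sup>2)"
  have "c > 0" unfolding c_def using assms \<open>M \<ge> 1\<close> by simp
  moreover have "norm (fourier_pmf \<nu> t) \<le> exp (- c * t\<^sup>2)"
    if "first_moment \<nu> \<le> ennreal a"
      and "\<forall>\<beta> r. \<beta> \<notin> {1, -1} \<longrightarrow> measure_pmf.prob \<nu> (arith_prog \<beta> r) \<le> \<rho>"
      and "t \<in> {-1/2<..1/2}" for \<nu> t
  proof -
    have "c * t\<^sup>2 = (1 - \<rho>) / 2 * (pi * t / (2 * real M))\<^sup>2 / 4"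
      unfolding c_def by (simp add: power2_eq_square field_simps)
    also have "\<dots> \<le> (1 - \<rho> - a / M) * (pi * t / (2 * real M))\<^sup>2 / 4"
      using cutoff by (intro divide_right_mono mult_right_mono) auto
    also have "\<dots> \<le> 1 - norm (fourier_pmf \<nu> t)"
      using that assms(1) \<open>M \<ge> 1\<close> by (intro fourier_deficit_for_cutoff) auto
    finally have "norm (fourier_pmf \<nu> t) \<le> 1 + (- c * t\<^sup>2)" by simp
    also have "\<dots> \<le> exp (- c * t\<^sup>2)" by (rule exp_ge_add_one_self)
    finally show ?thesis .
  qed
  ultimately show ?thesis by blast
qed

end
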